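(* Let $\phi\in C^4(\mathbb{R})$ be a profile function of a graph-like forward self-similar solution to the planar surface diffusion flow, i.e. $\phi$ satisfies $$\frac{\phi(x_1) - x_1\phi'(x_1)}{4\,v(x_1)} = -\frac{1}{v}\frac{d}{dx_1}\Big(\frac{1}{v}\frac{dk}{dx_1}\Big)\quad\text{for all }x_1\in\mathbb{R},$$ where $v=\sqrt{1+(\phi')^2}$ and $k = \phi''/v^3$. Suppose there are constants $\alpha,\beta\in\mathbb{R}$ such that $$\phi(0)\,\phi(x_1) \le \alpha\, s(x_1) + \beta\quad\text{for all }x_1\in\mathbb{R},$$ where $s(x_1)=\int_0^{x_1} v(z)\,dz$. Then $\phi(x_1) = c x_1$ for some $c\in\mathbb{R}$.
   Context: The displayed equation is the two-dimensional form $\frac{x\cdot\mathbf{n}}{4} = -\partial_s^2 k$ of the profile equation for the curve $\Gamma_*=\{(x_1,\phi(x_1))\}$ with upward unit normal $\mathbf{n}=(-\phi',1)/v$, curvature $k=\phi''/v^3$, and arc-length derivative $\partial_s = v^{-1}\partial_{x_1}$; $\Gamma_t=t^{1/4}\Gamma_*$ then solves $V=-\partial_s^2 k$. *)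

theory Defs
  imports "HOL-Analysis.Analysis"
begin

definition C4 :: "(real \<Rightarrow> real) \<Rightarrow> bool" where
  "C4 phi \<longleftrightarrow> (\<forall>k<4. \<forall>x. ((deriv ^^ k) phi) differentiable (at x))
                 \<and> continuous_on UNIV ((deriv ^^ 4) phi)"

definition vfun :: "(real \<Rightarrow> real) \<Rightarrow> real \<Rightarrow> real" where
  "vfun phi x = sqrt (1 + (deriv phi x)^2)"

definition curv :: "(real \<Rightarrow> real) \<Rightarrow> real \<Rightarrow> real" where
  "curv phi x = deriv (deriv phi) x / (vfun phi x)^3"

definition arclen :: "(real \<Rightarrow> real) \<Rightarrow> real \<Rightarrow> real" where
  "arclen phi x = (if 0 \<le> x then integral {0..x} (vfun phi) else - integral {x..0} (vfun phi))"

definition profile_eq :: "(real \<Rightarrow> real) \<Rightarrow> bool" where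
  "profile_eq phi \<longleftrightarrow> (\<forall>x. (phi x - x * deriv phi x) / (4 * vfun phi x)
      = - (1 / vfun phi x) * deriv (\<lambda>y. (1 / vfun phi y) * deriv (curv phi) y) x)"

end

(*
  The function phi'/v is the sine of the tangent angle; it is bounded and its x-derivative is
  the curvature k, so |k| cannot stay above 1 on a half-line. Writing k_s for the arc-length
  derivative of k, the quantity
    q = k k_s + ((x + phi phi')/v - s - alpha)/4
  has x-derivative v k_s^2 >= 0, and v q is the x-derivative of
    E = k^2/2 + (x^2 + phi^2 - s^2)/8 - alpha s/4.
  Since a chord is shorter than the arc, the growth hypothesis gives E <= k^2/2 + beta/4.
  If q were nonzero somewhere, monotonicity of q would make E, hence k^2, grow linearly towards
  +infinity or -infinity, which is impossible. So q = 0, hence k_s = 0, and the profile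
  equation reduces to phi = x phi', which forces phi to be linear.
*)
theory Submission
  imports Defs "HOL-Real_Asymp.Real_Asymp"
begin

lemma abs_diff_ge_if_abs_DERIV_ge:
  fixes f f' :: "real \<Rightarrow> real"
  assumes "a \<le> b"
    and f': "\<And>x. a \<le> x \<Longrightarrow> x \<le> b \<Longrightarrow> (f has_real_derivative f' x) (at x)"
    and c: "\<And>x. a \<le> x \<Longrightarrow> x \<le> b \<Longrightarrow> c \<le> \<bar>f' x\<bar>"
  shows "c * (b - a) \<le> \<bar>f b - f a\<bar>"
proof (cases "a = b")
  case False
  with \<open>a \<le> b\<close> obtain z where z: "a < z" "z < b" "f b - f a = (b - a) * f' z"
    using MVT2[of a b f f'] f' by auto
  have "c * (b - a) \<le> \<bar>f' z\<bar> * (b - a)"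
    using c[of z] z \<open>a \<le> b\<close> by (intro mult_right_mono) auto
  also have "\<dots> = \<bar>f b - f a\<bar>"
    using z \<open>a \<le> b\<close> by (simp add: abs_mult)
  finally show ?thesis .
qed simp

lemma bounded_DERIV_not_eventually_abs_ge_1:
  fixes f f' :: "real \<Rightarrow> real"
  assumes f': "\<And>x. (f has_real_derivative f' x) (at x)" and B: "\<And>x. \<bar>f x\<bar> \<le> B"
  shows "\<not> (\<forall>\<^sub>F x in at_top. 1 \<le> \<bar>f' x\<bar>)" and "\<not> (\<forall>\<^sub>F x in at_bot. 1 \<le> \<bar>f' x\<bar>)"
proof -
  have "0 \<le> B"
    using B[of 0] by linarith
  have not_steep: "\<not> (\<forall>x. a \<le> x \<and> x \<le> a + 2 * B + 1 \<longrightarrow> 1 \<le> \<bar>f' x\<bar>)" for a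
  proof
    assume steep: "\<forall>x. a \<le> x \<and> x \<le> a + 2 * B + 1 \<longrightarrow> 1 \<le> \<bar>f' x\<bar>"
    have "1 * (a + 2 * B + 1 - a) \<le> \<bar>f (a + 2 * B + 1) - f a\<bar>"
      by (rule abs_diff_ge_if_abs_DERIV_ge) (use f' steep \<open>0 \<le> B\<close> in auto)
    with B[of a] B[of "a + 2 * B + 1"] show False
      by (simp add: abs_if split: if_splits)
  qed
  show "\<not> (\<forall>\<^sub>F x in at_top. 1 \<le> \<bar>f' x\<bar>)"
  proof
    assume "\<forall>\<^sub>F x in at_top. 1 \<le> \<bar>f' x\<bar>"
    then obtain a where "\<forall>x\<ge>a. 1 \<le> \<bar>f' x\<bar>"
      by (auto simp: eventually_at_top_linorder)
    with not_steep[of a] show False by auto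
  qed
  show "\<not> (\<forall>\<^sub>F x in at_bot. 1 \<le> \<bar>f' x\<bar>)"
  proof
    assume "\<forall>\<^sub>F x in at_bot. 1 \<le> \<bar>f' x\<bar>"
    then obtain b where "\<forall>x\<le>b. 1 \<le> \<bar>f' x\<bar>"
      by (auto simp: eventually_at_bot_linorder)
    with not_steep[of "b - 2 * B - 1"] show False by auto
  qed
qed

lemma DERIV_ge_pos_imp_filterlim_at_top:
  fixes g g' :: "real \<Rightarrow> real"
  assumes g': "\<And>y. x \<le> y \<Longrightarrow> (g has_real_derivative g' y) (at y)"
    and c: "0 < c" "\<And>y. x \<le> y \<Longrightarrow> c \<le> g' y"
  shows "filterlim g at_top at_top"
proof (rule filterlim_at_top_mono)
  show "filterlim (\<lambda>y. g x + c * (y - x)) at_top at_top"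
    using c by real_asymp
  have "g x + c * (y - x) \<le> g y" if "x \<le> y" for y
  proof -
    have "g x - c * x \<le> g y - c * y"
    proof (rule DERIV_nonneg_imp_nondecreasing[OF that])
      fix t assume "x \<le> t"
      then have "((\<lambda>y. g y - c * y) has_real_derivative g' t - c) (at t)"
        by (auto intro!: derivative_eq_intros g')
      with c \<open>x \<le> t\<close> show "\<exists>d. ((\<lambda>y. g y - c * y) has_real_derivative d) (at t) \<and> 0 \<le> d"
        by force
    qed
    then show ?thesis
      by (simp add: algebra_simps)
  qed
  then show "\<forall>\<^sub>F y in at_top. g x + c * (y - x) \<le> g y"
    unfolding eventually_at_top_linorder by blast
qed

lemma DERIV_le_neg_imp_filterlim_at_bot:
  fixes g g' :: "real \<Rightarrow> real"
  assumes g': "\<And>y. y \<le> x \<Longrightarrow> (g has_real_derivative g' y) (at y)"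
    and c: "c < 0" "\<And>y. y \<le> x \<Longrightarrow> g' y \<le> c"
  shows "filterlim g at_top at_bot"
proof (rule filterlim_at_top_mono)
  show "filterlim (\<lambda>y. g x + c * (y - x)) at_top at_bot"
    using c by real_asymp
  have "g x + c * (y - x) \<le> g y" if "y \<le> x" for y
  proof -
    have "g x - c * x \<le> g y - c * y"
    proof (rule DERIV_nonpos_imp_nonincreasing[OF that])
      fix t assume "t \<le> x"
      then have "((\<lambda>y. g y - c * y) has_real_derivative g' t - c) (at t)"
        by (auto intro!: derivative_eq_intros g')
      with c \<open>t \<le> x\<close> show "\<exists>d. ((\<lambda>y. g y - c * y) has_real_derivative d) (at t) \<and> d \<le> 0"
        by force
    qed
    then show ?thesis
      by (simp add: algebra_simps)
  qed
  then show "\<forall>\<^sub>F y in at_bot. g x + c * (y - x) \<le> g y"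
    unfolding eventually_at_bot_linorder by blast
qed

lemma chord_le_arc_length:
  fixes f f' s :: "real \<Rightarrow> real"
  assumes "a \<le> b"
    and f': "\<And>y. a \<le> y \<Longrightarrow> y \<le> b \<Longrightarrow> (f has_real_derivative f' y) (at y)"
    and s': "\<And>y. a \<le> y \<Longrightarrow> y \<le> b \<Longrightarrow> (s has_real_derivative sqrt (1 + (f' y)^2)) (at y)"
  shows "sqrt ((b - a)^2 + (f b - f a)^2) \<le> s b - s a"
proof (cases "a = b")
  case False
  define d where "d = f b - f a"
  define N where "N = sqrt ((b - a)^2 + d^2)"
  have "0 < N"
    using False by (simp add: N_def add_pos_nonneg)
  have NN: "N * N = (b - a)^2 + d^2"
    by (simp add: N_def)
  have "N * s a - (b - a) * a - d * f a \<le> N * s b - (b - a) * b - d * f b"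
  proof (intro DERIV_nonneg_imp_nondecreasing[OF \<open>a \<le> b\<close>] exI conjI)
    fix y assume y: "a \<le> y" "y \<le> b"
    show "((\<lambda>y. N * s y - (b - a) * y - d * f y) has_real_derivative
        N * sqrt (1 + (f' y)^2) - (b - a) - d * f' y) (at y)"
      by (auto intro!: derivative_eq_intros f' s' y)
    show "0 \<le> N * sqrt (1 + (f' y)^2) - (b - a) - d * f' y"
      using norm_cauchy_schwarz[of "(b - a, d)" "(1, f' y)"] by (simp add: N_def norm_Pair)
  qed
  then have "N * N \<le> N * (s b - s a)"
    unfolding NN by (simp add: d_def power2_eq_square algebra_simps)
  then have "N \<le> s b - s a"
    using \<open>0 < N\<close> by simp
  then show ?thesis
    by (simp add: N_def d_def)
qed simp

lemma eq_mult_deriv_imp_linear: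
  fixes f f' f'' :: "real \<Rightarrow> real"
  assumes f': "\<And>x. (f has_real_derivative f' x) (at x)"
    and f'': "\<And>x. (f' has_real_derivative f'' x) (at x)"
    and euler: "\<And>x. f x = x * f' x"
  shows "\<exists>c. \<forall>x. f x = c * x"
proof -
  have f''_0: "f'' x = 0" if "x \<noteq> 0" for x
  proof -
    have "((\<lambda>x. x * f' x) has_real_derivative f' x + x * f'' x) (at x)"
      by (auto intro!: derivative_eq_intros f'')
    then have "(f has_real_derivative f' x + x * f'' x) (at x)"
      by (simp add: euler[abs_def, symmetric])
    with f' have "f' x + x * f'' x = f' x"
      using DERIV_unique by blast
    with that show ?thesis by simp
  qed
  have "f' x = f' 0" for x
  proof (cases x "0 :: real" rule: linorder_cases)
    case less
    then obtain z where "x < z" "z < 0" "f' 0 - f' x = (0 - x) * f'' z"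
      using MVT2[of x 0 f' f''] f'' by blast
    then show ?thesis using f''_0[of z] by simp
  next
    case greater
    then obtain z where "0 < z" "z < x" "f' x - f' 0 = (x - 0) * f'' z"
      using MVT2[of 0 x f' f''] f'' by blast
    then show ?thesis using f''_0[of z] by simp
  qed simp
  then show ?thesis
    using euler by (metis mult.commute)
qed

text \<open>ks is the arc-length derivative of the curvature, and ks_deriv is the profile equation
  multiplied by v.\<close>

locale self_similar_profile =
  fixes phi phi' phi'' v k ks s :: "real \<Rightarrow> real"
  assumes phi_deriv: "(phi has_real_derivative phi' x) (at x)"
    and phi'_deriv: "(phi' has_real_derivative phi'' x) (at x)"
    and v_eq: "v x = sqrt (1 + (phi' x)^2)"
    and k_eq: "k x = phi'' x / (v x)^3"
    and k_deriv: "(k has_real_derivative v x * ks x) (at x)"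
    and ks_deriv: "(ks has_real_derivative - (phi x - x * phi' x) / 4) (at x)"
    and s_deriv: "(s has_real_derivative v x) (at x)"
    and s_0: "s 0 = 0"
begin

lemma v_ge_1: "1 \<le> v x"
  by (simp add: v_eq)

lemma v_pos: "0 < v x"
  using v_ge_1[of x] by linarith

lemma v_sq: "(v x)^2 = 1 + (phi' x)^2"
  by (simp add: v_eq add_pos_nonneg)

lemma v_deriv: "(v has_real_derivative phi' x * phi'' x / v x) (at x)"
proof -
  have v: "v = (\<lambda>x. sqrt (1 + (phi' x)^2))"
    by (simp add: v_eq[abs_def])
  have "0 < 1 + (phi' x)^2"
    by (simp add: add_pos_nonneg)
  then show ?thesis
    unfolding v by (auto intro!: derivative_eq_intros phi'_deriv simp: field_simps)
qed

lemma abs_phi'_div_v_le_1: "\<bar>phi' x / v x\<bar> \<le> 1"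
proof -
  have "\<bar>phi' x\<bar> \<le> v x"
    by (simp add: v_eq real_le_rsqrt)
  then show ?thesis
    using v_pos[of x] by (simp add: abs_div)
qed

lemma phi'_div_v_deriv: "((\<lambda>x. phi' x / v x) has_real_derivative k x) (at x)"
proof (rule DERIV_cong[OF DERIV_divide[OF phi'_deriv v_deriv]])
  show "v x \<noteq> 0"
    using v_pos[of x] by simp
  have "(phi'' x * v x - phi' x * (phi' x * phi'' x / v x)) / (v x * v x)
      = phi'' x * ((v x)^2 - (phi' x)^2) / (v x)^3"
    using v_pos[of x] by (simp add: field_simps power2_eq_square power3_eq_cube)
  also have "\<dots> = k x"
    by (simp add: v_sq k_eq)
  finally show "(phi'' x * v x - phi' x * (phi' x * phi'' x / v x)) / (v x * v x) = k x" .
qed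

lemma not_eventually_abs_curvature_ge_1:
  shows "\<not> (\<forall>\<^sub>F x in at_top. 1 \<le> \<bar>k x\<bar>)" and "\<not> (\<forall>\<^sub>F x in at_bot. 1 \<le> \<bar>k x\<bar>)"
  using bounded_DERIV_not_eventually_abs_ge_1[OF phi'_div_v_deriv abs_phi'_div_v_le_1] by blast+

lemma chord_sq_le_arc_length_sq: "x^2 + (phi x - phi 0)^2 \<le> (s x)^2"
proof (cases "0 \<le> x")
  case True
  have "sqrt ((x - 0)^2 + (phi x - phi 0)^2) \<le> s x - s 0"
    by (rule chord_le_arc_length[OF True phi_deriv]) (simp add: s_deriv v_eq[symmetric])
  then show ?thesis
    using s_0 by (simp add: sqrt_le_D)
next
  case False
  have "sqrt ((0 - x)^2 + (phi 0 - phi x)^2) \<le> s 0 - s x"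
    by (rule chord_le_arc_length[OF _ phi_deriv]) (use False in \<open>simp_all add: s_deriv v_eq[symmetric]\<close>)
  then show ?thesis
    using s_0 sqrt_le_D by (fastforce simp: power2_commute)
qed

definition energy :: "real \<Rightarrow> real \<Rightarrow> real" where
  "energy \<alpha> x = (k x)^2 / 2 + (x^2 + (phi x)^2 - (s x)^2) / 8 - \<alpha> * s x / 4"

definition energy_rate :: "real \<Rightarrow> real \<Rightarrow> real" where
  "energy_rate \<alpha> x = k x * ks x + ((x + phi x * phi' x) / v x - s x - \<alpha>) / 4"

lemma energy_deriv: "(energy \<alpha> has_real_derivative v x * energy_rate \<alpha> x) (at x)"
  unfolding energy_def[abs_def] energy_rate_def
  using v_pos[of x]
  by (auto intro!: derivative_eq_intros k_deriv s_deriv phi_deriv simp: field_simps)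

text \<open>(x + phi phi')/v is the tangential component of the position vector (x, phi).\<close>

lemma tangential_support_deriv:
  "((\<lambda>x. (x + phi x * phi' x) / v x) has_real_derivative v x + k x * (phi x - x * phi' x)) (at x)"
proof (rule DERIV_cong[OF DERIV_divide[OF _ v_deriv]])
  show "((\<lambda>x. x + phi x * phi' x) has_real_derivative 1 + (phi' x * phi' x + phi x * phi'' x)) (at x)"
    by (auto intro!: derivative_eq_intros phi_deriv phi'_deriv)
  show "v x \<noteq> 0"
    using v_pos[of x] by simp
  show "((1 + (phi' x * phi' x + phi x * phi'' x)) * v x - (x + phi x * phi' x) * (phi' x * phi'' x / v x))
      / (v x * v x) = v x + k x * (phi x - x * phi' x)"
    using v_pos[of x] v_sq[of x] unfolding k_eq by (simp add: field_simps) algebra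
qed

lemma energy_rate_deriv: "(energy_rate \<alpha> has_real_derivative v x * (ks x)^2) (at x)"
  unfolding energy_rate_def[abs_def]
  by (rule DERIV_cong[OF DERIV_add[OF DERIV_mult[OF k_deriv ks_deriv]
        DERIV_cdivide[OF DERIV_diff[OF DERIV_diff[OF tangential_support_deriv s_deriv] DERIV_const]]]])
    (simp add: field_simps power2_eq_square)

lemma energy_rate_mono: "mono (energy_rate \<alpha>)"
proof (rule monoI)
  fix a b :: real
  assume "a \<le> b"
  then show "energy_rate \<alpha> a \<le> energy_rate \<alpha> b"
  proof (rule DERIV_nonneg_imp_nondecreasing)
    fix t
    show "\<exists>d. (energy_rate \<alpha> has_real_derivative d) (at t) \<and> 0 \<le> d"
      using energy_rate_deriv[of \<alpha> t] v_pos[of t] by force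
  qed
qed

context
  fixes \<alpha> \<beta> :: real
  assumes growth: "\<And>x. phi 0 * phi x \<le> \<alpha> * s x + \<beta>"
begin

lemma energy_le_curvature_sq: "energy \<alpha> x \<le> (k x)^2 / 2 + \<beta> / 4"
proof -
  have "x^2 + (phi x)^2 - (s x)^2 \<le> 2 * (phi 0 * phi x) - (phi 0)^2"
    using chord_sq_le_arc_length_sq[of x] by (simp add: power2_diff algebra_simps)
  also have "\<dots> \<le> 2 * (phi 0 * phi x)"
    by simp
  also have "\<dots> \<le> 2 * (\<alpha> * s x + \<beta>)"
    using growth[of x] by simp
  finally have "x^2 + (phi x)^2 - (s x)^2 \<le> 2 * (\<alpha> * s x + \<beta>)" .
  then show ?thesis
    by (simp add: energy_def field_simps)
qed

lemma eventually_abs_curvature_ge_1: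
  assumes "filterlim (energy \<alpha>) at_top F"
  shows "\<forall>\<^sub>F y in F. 1 \<le> \<bar>k y\<bar>"
proof -
  have "\<forall>\<^sub>F y in F. 1 / 2 + \<beta> / 4 \<le> energy \<alpha> y"
    using assms by (simp add: filterlim_at_top)
  then show ?thesis
  proof (rule eventually_mono)
    fix y assume "1 / 2 + \<beta> / 4 \<le> energy \<alpha> y"
    with energy_le_curvature_sq[of y] have "1\<^sup>2 \<le> (k y)^2"
      by simp
    then show "1 \<le> \<bar>k y\<bar>"
      using abs_le_square_iff[of 1 "k y"] by simp
  qed
qed

lemma energy_rate_eq_0: "energy_rate \<alpha> x = 0"
proof (rule ccontr)
  assume "energy_rate \<alpha> x \<noteq> 0"
  then consider "0 < energy_rate \<alpha> x" | "energy_rate \<alpha> x < 0"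
    by linarith
  then show False
  proof cases
    case pos: 1
    have "energy_rate \<alpha> x \<le> v y * energy_rate \<alpha> y" if "x \<le> y" for y
    proof -
      have q: "energy_rate \<alpha> x \<le> energy_rate \<alpha> y"
        using energy_rate_mono that by (rule monoD)
      also have "\<dots> \<le> v y * energy_rate \<alpha> y"
        using mult_right_mono[OF v_ge_1[of y], of "energy_rate \<alpha> y"] q pos by simp
      finally show ?thesis .
    qed
    then have "filterlim (energy \<alpha>) at_top at_top"
      using DERIV_ge_pos_imp_filterlim_at_top[OF energy_deriv pos] by blast
    then show False
      using eventually_abs_curvature_ge_1 not_eventually_abs_curvature_ge_1(1) by blast
  next
    case neg: 2
    have "v y * energy_rate \<alpha> y \<le> energy_rate \<alpha> x" if "y \<le> x" for y
    proof -
      have q: "energy_rate \<alpha> y \<le> energy_rate \<alpha> x"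
        using energy_rate_mono that by (rule monoD)
      have "v y * energy_rate \<alpha> y \<le> energy_rate \<alpha> y"
        using mult_right_mono_neg[OF v_ge_1[of y], of "energy_rate \<alpha> y"] q neg by simp
      also note q
      finally show ?thesis .
    qed
    then have "filterlim (energy \<alpha>) at_top at_bot"
      using DERIV_le_neg_imp_filterlim_at_bot[OF energy_deriv neg] by blast
    then show False
      using eventually_abs_curvature_ge_1 not_eventually_abs_curvature_ge_1(2) by blast
  qed
qed

lemma phi_eq_mult_phi': "phi x = x * phi' x"
proof -
  have "ks y = 0" for y
  proof -
    have "energy_rate \<alpha> = (\<lambda>_. 0)"
      using energy_rate_eq_0 by (simp add: fun_eq_iff)
    then have "v y * (ks y)^2 = 0"
      using energy_rate_deriv[of \<alpha> y] DERIV_unique DERIV_const by metis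
    then show ?thesis
      using v_pos[of y] by simp
  qed
  then have "ks = (\<lambda>_. 0)"
    by (simp add: fun_eq_iff)
  then have "- (phi x - x * phi' x) / 4 = 0"
    using ks_deriv[of x] DERIV_unique DERIV_const by metis
  then show ?thesis
    by simp
qed

end

end

lemma C4_DERIV:
  assumes "C4 phi"
  shows "(phi has_real_derivative deriv phi x) (at x)"
    and "(deriv phi has_real_derivative deriv (deriv phi) x) (at x)"
    and "(deriv (deriv phi) has_real_derivative deriv (deriv (deriv phi)) x) (at x)"
    and "deriv (deriv (deriv phi)) differentiable (at x)"
proof -
  have "((deriv ^^ j) phi) differentiable (at x)" if "j < 4" for j
    using assms that by (simp add: C4_def)
  from this[of 0] this[of 1] this[of 2] this[of 3] show
    "(phi has_real_derivative deriv phi x) (at x)"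
    "(deriv phi has_real_derivative deriv (deriv phi) x) (at x)"
    "(deriv (deriv phi) has_real_derivative deriv (deriv (deriv phi)) x) (at x)"
    "deriv (deriv (deriv phi)) differentiable (at x)"
    by (simp_all add: DERIV_deriv_iff_real_differentiable eval_nat_numeral)
qed

lemma signed_integral_has_real_derivative:
  fixes f :: "real \<Rightarrow> real"
  assumes f: "continuous_on UNIV f"
  shows "((\<lambda>x. if 0 \<le> x then integral {0..x} f else - integral {x..0} f) has_real_derivative f x) (at x)"
proof -
  define a where "a = - \<bar>x\<bar> - 1"
  have "((\<lambda>y. integral {a..y} f) has_real_derivative f x) (at x within {a..\<bar>x\<bar> + 1})"
    by (rule integral_has_real_derivative) (auto simp: a_def intro: continuous_on_subset[OF f])
  moreover have "at x within {a..\<bar>x\<bar> + 1} = at x"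
    by (rule at_within_interior) (auto simp: a_def)
  ultimately have "((\<lambda>y. integral {a..y} f - integral {a..0} f) has_real_derivative f x) (at x)"
    by (auto intro!: derivative_eq_intros)
  then show ?thesis
  proof (rule has_field_derivative_transform_within_open)
    show "open {a<..}" "x \<in> {a<..}"
      by (auto simp: a_def)
    have "f integrable_on {c..d}" for c d
      by (rule integrable_continuous_interval) (rule continuous_on_subset[OF f], simp)
    moreover have "a \<le> 0"
      by (simp add: a_def)
    ultimately show "integral {a..y} f - integral {a..0} f
        = (if 0 \<le> y then integral {0..y} f else - integral {y..0} f)" if "y \<in> {a<..}" for y
      using that Henstock_Kurzweil_Integration.integral_combine[of a 0 y f]
        Henstock_Kurzweil_Integration.integral_combine[of a y 0 f]
      by (cases "0 \<le> y") auto
  qed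
qed

lemma C4_curv_differentiable:
  assumes "C4 phi"
  shows "curv phi differentiable (at x)"
    and "(\<lambda>y. 1 / vfun phi y * deriv (curv phi) y) differentiable (at x)"
proof -
  define phi' phi'' phi''' where "phi' = deriv phi" and "phi'' = deriv phi'" and "phi''' = deriv phi''"
  note derivs = C4_DERIV[OF assms, folded phi'_def, folded phi''_def, folded phi'''_def]
  have v: "vfun phi = (\<lambda>y. sqrt (1 + (phi' y)^2))"
    by (simp add: vfun_def[abs_def] phi'_def)
  have v_pos: "0 < vfun phi y" for y
    by (simp add: v add_pos_nonneg)
  have v_deriv: "(vfun phi has_real_derivative phi' y * phi'' y / vfun phi y) (at y)" for y
    unfolding v using add_pos_nonneg[of 1 "(phi' y)^2"]
    by (auto intro!: derivative_eq_intros derivs simp: field_simps)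
  define k' where "k' y = (phi''' y - 3 * phi' y * (phi'' y)^2 / (vfun phi y)^2) / (vfun phi y)^3" for y
  have k: "curv phi = (\<lambda>y. phi'' y / (vfun phi y)^3)"
    by (simp add: curv_def[abs_def] phi'_def phi''_def)
  have k_deriv: "(curv phi has_real_derivative k' y) (at y)" for y
    unfolding k k'_def using v_pos[of y]
    by (auto intro!: derivative_eq_intros derivs v_deriv simp: field_simps power2_eq_square power3_eq_cube)
  then show "curv phi differentiable (at x)"
    using real_differentiable_def by blast
  from k_deriv have "deriv (curv phi) = k'"
    using DERIV_imp_deriv by blast
  have "(phi''' has_real_derivative deriv phi''' y) (at y)" for y
    using derivs(4) by (simp add: DERIV_deriv_iff_real_differentiable)
  then show "(\<lambda>y. 1 / vfun phi y * deriv (curv phi) y) differentiable (at x)"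
    unfolding \<open>deriv (curv phi) = k'\<close> k'_def real_differentiable_def using v_pos[of x]
    by (auto intro!: exI derivative_eq_intros derivs v_deriv)
qed

lemma C4_profile_eq_imp_self_similar_profile:
  assumes "C4 phi" and "profile_eq phi"
  shows "self_similar_profile phi (deriv phi) (deriv (deriv phi)) (vfun phi) (curv phi)
    (\<lambda>x. 1 / vfun phi x * deriv (curv phi) x) (arclen phi)"
proof -
  define phi' v ks
    where "phi' = deriv phi" and "v = vfun phi" and "ks y = 1 / v y * deriv (curv phi) y" for y
  note derivs = C4_DERIV[OF assms(1), folded phi'_def]
  have v_pos: "0 < v x" for x
    by (simp add: v_def vfun_def add_pos_nonneg)
  have ks_deriv: "(ks has_real_derivative - (phi x - x * phi' x) / 4) (at x)" for x
  proof -
    have ks': "(ks has_real_derivative deriv ks x) (at x)"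
      using C4_curv_differentiable(2)[OF assms(1)]
      by (simp add: DERIV_deriv_iff_real_differentiable ks_def[abs_def] v_def)
    have "(phi x - x * phi' x) / (4 * v x) = - (1 / v x) * deriv ks x"
      using assms(2) by (simp add: profile_eq_def ks_def[abs_def] v_def phi'_def)
    then have "v x * (4 * deriv ks x + (phi x - x * phi' x)) = 0"
      using v_pos[of x] by (simp add: field_simps)
    then have "deriv ks x = - (phi x - x * phi' x) / 4"
      using v_pos[of x] by simp
    with ks' show ?thesis
      by simp
  qed
  have "continuous_on UNIV phi'"
    using derivs(2) by (meson DERIV_isCont continuous_at_imp_continuous_on)
  then have "continuous_on UNIV v"
    unfolding v_def vfun_def[abs_def] phi'_def[symmetric] by (intro continuous_intros)
  then have s_deriv: "(arclen phi has_real_derivative v x) (at x)" for x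
    using signed_integral_has_real_derivative unfolding arclen_def[abs_def] v_def by blast
  show ?thesis
    unfolding phi'_def[symmetric] v_def[symmetric] ks_def[symmetric]
  proof
    fix x
    show "v x = sqrt (1 + (phi' x)^2)" "curv phi x = deriv phi' x / (v x)^3"
      by (simp_all add: v_def vfun_def curv_def phi'_def)
    show "(curv phi has_real_derivative v x * ks x) (at x)"
      using C4_curv_differentiable(1)[OF assms(1)] v_pos[of x]
      by (simp add: DERIV_deriv_iff_real_differentiable ks_def)
  qed (use derivs ks_deriv s_deriv in \<open>simp_all add: arclen_def\<close>)
qed

theorem theorem3p2:
  fixes phi :: "real \<Rightarrow> real" and \<alpha> \<beta> :: real
  assumes "C4 phi"
    and "profile_eq phi"
    and "\<forall>x. phi 0 * phi x \<le> \<alpha> * arclen phi x + \<beta>"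
  shows "\<exists>c::real. \<forall>x. phi x = c * x"
proof -
  interpret self_similar_profile phi "deriv phi" "deriv (deriv phi)" "vfun phi" "curv phi"
    "\<lambda>x. 1 / vfun phi x * deriv (curv phi) x" "arclen phi"
    using assms(1,2) by (rule C4_profile_eq_imp_self_similar_profile)
  have "phi x = x * deriv phi x" for x
    using phi_eq_mult_phi' assms(3) by blast
  then show ?thesis
    using eq_mult_deriv_imp_linear phi_deriv phi'_deriv by blast
qed

end
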